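(* Let $f\in\Gamma_0(X)$ and $x\in\operatorname{dom}f$. Then for every $\varepsilon\ge0$, \[ \partial_\varepsilon f^+(x)=\bigcup_{0\le\lambda\le1}\partial_{\varepsilon+\lambda f(x)-f^+(x)}(\lambda f)(x), \] where $f^+:=\max\{f,0\}$, $(\lambda f)(z):=\lambda f(z)$ for $\lambda>0$, and $0f:=\mathrm{I}_{\operatorname{dom}f}$.
   Context: $X$ is a real separated locally convex space with dual $X^*$ (weak$^*$ topology). $\Gamma_0(X)$ is the set of proper convex lsc functions $X\to\mathbb{R}\cup\{+\infty\}$; $\operatorname{dom}f=\{x: f(x)<+\infty\}$. $\mathrm{I}_A$ is the indicator function of $A$ ($0$ on $A$, $+\infty$ outside). For $g:X\to\overline{\mathbb{R}}$, $\partial_\delta g(x)=\{x^*\in X^*:\ g(y)\ge g(x)+\langle x^*,y-x\rangle-\delta\ \forall y\}$ if $g(x)\in\mathbb{R}$ and $\delta\ge0$, and $\partial_\delta g(x)=\emptyset$ if $g(x)\notin\mathbb{R}$ or $\delta<0$. *)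

theory Defs
  imports "HOL-Analysis.Analysis"
begin

definition locally_convex_space :: "'a::real_vector topology \<Rightarrow> bool" where
  "locally_convex_space T \<longleftrightarrow>
     topspace T = UNIV \<and>
     Hausdorff_space T \<and>
     continuous_map (prod_topology T T) T (\<lambda>(x, y). x + y) \<and>
     continuous_map (prod_topology euclideanreal T) T (\<lambda>(a, x). a *\<^sub>R x) \<and>
     (\<forall>U. openin T U \<and> 0 \<in> U \<longrightarrow> (\<exists>V. openin T V \<and> convex V \<and> 0 \<in> V \<and> V \<subseteq> U))"

definition dual_space :: "'a::real_vector topology \<Rightarrow> ('a \<Rightarrow> real) set" where
  "dual_space T = {l. linear l \<and> continuous_map T euclideanreal l}"

definition dom_fun :: "('a \<Rightarrow> ereal) \<Rightarrow> 'a set" where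
  "dom_fun f = {x. f x < \<infinity>}"

definition proper_fun :: "('a \<Rightarrow> ereal) \<Rightarrow> bool" where
  "proper_fun f \<longleftrightarrow> (\<forall>x. f x \<noteq> -\<infinity>) \<and> dom_fun f \<noteq> {}"

definition convex_fun :: "('a::real_vector \<Rightarrow> ereal) \<Rightarrow> bool" where
  "convex_fun f \<longleftrightarrow> convex {(x, r::real). f x \<le> ereal r}"

definition lsc_fun :: "'a topology \<Rightarrow> ('a \<Rightarrow> ereal) \<Rightarrow> bool" where
  "lsc_fun T f \<longleftrightarrow> (\<forall>c::real. closedin T {x. f x \<le> ereal c})"

definition Gamma0 :: "'a::real_vector topology \<Rightarrow> ('a \<Rightarrow> ereal) set" where
  "Gamma0 T = {f. proper_fun f \<and> convex_fun f \<and> lsc_fun T f}"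

definition ind_fun :: "'a set \<Rightarrow> 'a \<Rightarrow> ereal" where
  "ind_fun A x = (if x \<in> A then 0 else \<infinity>)"

definition fplus :: "('a \<Rightarrow> ereal) \<Rightarrow> 'a \<Rightarrow> ereal" where
  "fplus f x = max (f x) 0"

definition scale_fun :: "real \<Rightarrow> ('a \<Rightarrow> ereal) \<Rightarrow> 'a \<Rightarrow> ereal" where
  "scale_fun lam f = (if lam = 0 then ind_fun (dom_fun f) else (\<lambda>z. ereal lam * f z))"

definition eps_subdiff :: "'a::real_vector topology \<Rightarrow> ('a \<Rightarrow> ereal) \<Rightarrow> real \<Rightarrow> 'a \<Rightarrow> ('a \<Rightarrow> real) set" where
  "eps_subdiff T g d x =
     (if \<bar>g x\<bar> \<noteq> \<infinity> \<and> d \<ge> 0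
      then {l \<in> dual_space T. \<forall>y. g y \<ge> g x + ereal (l (y - x) - d)}
      else {})"

end

theory Submission imports Defs begin

text \<open>
  The inclusion from right to left holds because \<open>\<lambda> f \<le> f\<^sup>+\<close> on \<open>dom f\<close> for \<open>\<lambda> \<in> [0,1]\<close>.
  For the other one, an \<open>\<epsilon>\<close>-subgradient \<open>l\<close> of \<open>f\<^sup>+\<close> at \<open>x\<close> gives an affine minorant
  \<open>h = f\<^sup>+(x) + l(\<cdot> - x) - \<epsilon>\<close> of \<open>max f 0\<close> on \<open>dom f\<close>, and it suffices to find
  \<open>\<lambda> \<in> [0,1]\<close> with \<open>h \<le> \<lambda> f\<close> on \<open>dom f\<close>. Take \<open>\<lambda> = sup h(y)/f(y)\<close> over the points
  where \<open>h > 0\<close>. At a point \<open>z\<close> with \<open>f(z) < 0\<close>, the chord from a point \<open>y\<close> with \<open>f(y) > 0\<close>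
  meets the sublevel set \<open>{f \<le> 0}\<close>, where \<open>h \<le> 0\<close>; as \<open>h\<close> is affine and \<open>f\<close> convex along the
  chord this gives \<open>h(y)/f(y) \<le> h(z)/f(z)\<close>, hence \<open>\<lambda> f(z) \<ge> h(z)\<close>.
  Neither lower semicontinuity nor the topology plays any role.
\<close>

lemma affine_minorant_ratio_le:
  fixes F :: "'a::real_vector \<Rightarrow> real" and l :: "'a \<Rightarrow> real"
  assumes F: "convex_on D F" and l: "linear l"
    and minorant: "\<And>y. y \<in> D \<Longrightarrow> l y + b \<le> max (F y) 0"
    and y: "y \<in> D" "F y > 0" and z: "z \<in> D" "F z < 0"
  shows "(l y + b) / F y \<le> (l z + b) / F z"
proof -
  define t where "t = F y / (F y - F z)"
  define w where "w = (1 - t) *\<^sub>R y + t *\<^sub>R z"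
  have t: "0 \<le> t" "t \<le> 1" using y z by (auto simp: t_def field_simps)
  have "w \<in> D"
    using F y z t by (auto simp: w_def convex_on_def intro: convexD_alt)
  have "F w \<le> (1 - t) * F y + t * F z"
    using convex_onD[OF F t] y z by (simp add: w_def)
  also have "\<dots> = 0" using y z by (simp add: t_def field_simps)
  finally have "l w + b \<le> 0" using minorant[OF \<open>w \<in> D\<close>] by simp
  moreover have "l w + b = (1 - t) * (l y + b) + t * (l z + b)"
    unfolding w_def linear_add[OF l] linear_scale[OF l] by (simp add: algebra_simps)
  moreover have "(F y - F z) * t = F y" "(F y - F z) * (1 - t) = - F z"
    using y z by (simp_all add: t_def right_diff_distrib)
  then have "(F y - F z) * ((1 - t) * (l y + b) + t * (l z + b)) = F y * (l z + b) - F z * (l y + b)"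
    by (metis (no_types, lifting) distrib_left mult.assoc mult_minus_left uminus_add_conv_diff add.commute)
  ultimately have "F y * (l z + b) \<le> F z * (l y + b)"
    using y z by (smt (verit) mult_nonneg_nonpos)
  then have "F z * (l y + b) / (F y * F z) \<le> F y * (l z + b) / (F y * F z)"
    using y z by (intro divide_right_mono_neg) (auto simp: mult_pos_neg less_imp_le)
  then show ?thesis using y z by simp
qed

lemma affine_minorant_of_pos_part:
  fixes F :: "'a::real_vector \<Rightarrow> real" and l :: "'a \<Rightarrow> real"
  assumes F: "convex_on D F" and l: "linear l"
    and minorant: "\<And>y. y \<in> D \<Longrightarrow> l y + b \<le> max (F y) 0"
  shows "\<exists>lam\<in>{0..1}. \<forall>y\<in>D. l y + b \<le> lam * F y"
proof (cases "\<exists>y\<in>D. l y + b > 0")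
  case False
  then show ?thesis by (intro bexI[of _ 0]) (auto simp: not_less)
next
  case True
  define P where "P = {y \<in> D. l y + b > 0}"
  define ratio where "ratio y = (l y + b) / F y" for y
  have F_pos: "F y > 0" and ratio: "0 < ratio y" "ratio y \<le> 1" if "y \<in> P" for y
    using minorant[of y] that by (auto simp: P_def ratio_def max_def field_simps split: if_splits)
  have "P \<noteq> {}" using True by (auto simp: P_def)
  have bdd: "bdd_above (ratio ` P)" using ratio by (intro bdd_aboveI2[of _ _ 1]) auto
  define lam where "lam = (SUP y\<in>P. ratio y)"
  have ratio_le: "ratio y \<le> lam" if "y \<in> P" for y
    unfolding lam_def using cSUP_upper[OF that bdd] .
  have "lam \<le> 1" unfolding lam_def using \<open>P \<noteq> {}\<close> ratio by (intro cSUP_least) auto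
  moreover have "0 \<le> lam" using \<open>P \<noteq> {}\<close> ratio_le ratio by (meson ex_in_conv order.trans less_imp_le)
  moreover have "l y + b \<le> lam * F y" if "y \<in> D" for y
  proof (cases "y \<in> P")
    case True
    then have "l y + b = ratio y * F y" using F_pos[OF True] by (simp add: ratio_def)
    also have "\<dots> \<le> lam * F y" using ratio_le[OF True] F_pos[OF True] by (simp add: mult_right_mono)
    finally show ?thesis .
  next
    case False
    then have "l y + b \<le> 0" using that by (auto simp: P_def)
    show ?thesis
    proof (cases "F y < 0")
      case True
      have "lam \<le> ratio y" unfolding lam_def using \<open>P \<noteq> {}\<close>
        by (intro cSUP_least) (auto simp: P_def ratio_def F_pos
            intro: affine_minorant_ratio_le[OF F l minorant _ _ \<open>y \<in> D\<close> True])
      then have "ratio y * F y \<le> lam * F y" using True by (simp add: mult_right_mono_neg)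
      then show ?thesis using True by (simp add: ratio_def)
    qed (use \<open>l y + b \<le> 0\<close> mult_nonneg_nonneg[OF \<open>0 \<le> lam\<close>, of "F y"] in auto)
  qed
  ultimately show ?thesis by (intro bexI[of _ lam]) auto
qed

lemma convex_on_dom_fun:
  assumes "convex_fun f" and "\<And>y. f y \<noteq> -\<infinity>"
  shows "convex_on (dom_fun f) (\<lambda>y. real_of_ereal (f y))"
proof -
  have real: "f y = ereal (real_of_ereal (f y))" if "y \<in> dom_fun f" for y
    using that assms(2)[of y] by (cases "f y") (auto simp: dom_fun_def)
  have epi: "convex {(y, r::real). f y \<le> ereal r}"
    using assms(1) by (simp add: convex_fun_def)
  have comb: "f (u *\<^sub>R a + v *\<^sub>R b) \<le> ereal (u * real_of_ereal (f a) + v * real_of_ereal (f b))"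
    if "a \<in> dom_fun f" "b \<in> dom_fun f" "0 \<le> u" "0 \<le> v" "u + v = 1" for a b u v
    using convexD[OF epi, of "(a, real_of_ereal (f a))" "(b, real_of_ereal (f b))" u v] that real
    by auto
  then have dom: "u *\<^sub>R a + v *\<^sub>R b \<in> dom_fun f"
    if "a \<in> dom_fun f" "b \<in> dom_fun f" "0 \<le> u" "0 \<le> v" "u + v = 1" for a b u v
    using that by (force simp: dom_fun_def intro: le_less_trans)
  show ?thesis
    unfolding convex_on_def convex_def
    using comb dom real by (metis ereal_less_eq(3))
qed

lemma eps_subdiff_real_on_dom:
  assumes x: "x \<in> D"
    and real: "\<And>y. y \<in> D \<Longrightarrow> g y = ereal (G y)" and infinite: "\<And>y. y \<notin> D \<Longrightarrow> g y = \<infinity>"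
  shows "eps_subdiff T g d x =
    {l \<in> dual_space T. 0 \<le> d \<and> (\<forall>y\<in>D. G x + l (y - x) - d \<le> G y)}"
proof -
  have "g x + ereal (l (y - x) - d) \<le> g y \<longleftrightarrow> (y \<in> D \<longrightarrow> G x + l (y - x) - d \<le> G y)" for l y
    by (cases "y \<in> D") (simp_all add: real infinite x add_diff_eq)
  then show ?thesis using real[OF x] by (auto simp: eps_subdiff_def)
qed

theorem lemma4:
  fixes T :: "'a::real_vector topology" and f :: "'a \<Rightarrow> ereal" and x :: 'a and \<epsilon> :: real
  assumes "locally_convex_space T"
    and "f \<in> Gamma0 T"
    and "x \<in> dom_fun f"
    and "\<epsilon> \<ge> 0"
  shows "eps_subdiff T (fplus f) \<epsilon> x =
    (\<Union>lam\<in>{0..1}. eps_subdiff T (scale_fun lam f)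
        (\<epsilon> + lam * real_of_ereal (f x) - real_of_ereal (fplus f x)) x)"
proof -
  define D where "D = dom_fun f"
  define F where "F y = real_of_ereal (f y)" for y
  have not_minf: "f y \<noteq> -\<infinity>" for y using assms(2) by (auto simp: Gamma0_def proper_fun_def)
  have x: "x \<in> D" using assms(3) by (simp add: D_def)
  have f_real: "f y = ereal (F y)" if "y \<in> D" for y
    using that not_minf[of y] by (cases "f y") (auto simp: D_def dom_fun_def F_def)
  have f_inf: "f y = \<infinity>" if "y \<notin> D" for y using that by (auto simp: D_def dom_fun_def)
  have F: "convex_on D F"
    unfolding D_def F_def[abs_def] using assms(2)
    by (intro convex_on_dom_fun not_minf) (simp add: Gamma0_def)
  have fplus: "eps_subdiff T (fplus f) \<epsilon> x =
      {l \<in> dual_space T. \<forall>y\<in>D. max (F x) 0 + l (y - x) - \<epsilon> \<le> max (F y) 0}"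
    using assms(4) by (subst eps_subdiff_real_on_dom[OF x]) (auto simp: fplus_def f_real f_inf max_def)
  have scale: "eps_subdiff T (scale_fun lam f) d x =
      {l \<in> dual_space T. 0 \<le> d \<and> (\<forall>y\<in>D. lam * F x + l (y - x) - d \<le> lam * F y)}"
    if "0 \<le> lam" for lam d
    using that
    by (subst eps_subdiff_real_on_dom[OF x])
       (auto simp: scale_fun_def ind_fun_def D_def[symmetric] f_real f_inf)
  have at_x: "real_of_ereal (f x) = F x" "real_of_ereal (fplus f x) = max (F x) 0"
    by (simp_all add: fplus_def f_real[OF x] max_def)
  show ?thesis
  proof (intro equalityI subsetI)
    fix l assume "l \<in> eps_subdiff T (fplus f) \<epsilon> x"
    then have l: "l \<in> dual_space T" and linear: "linear l"
      and "\<And>y. y \<in> D \<Longrightarrow> l y + (max (F x) 0 - l x - \<epsilon>) \<le> max (F y) 0"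
      by (auto simp: fplus dual_space_def linear_diff)
    then obtain lam where lam: "lam \<in> {0..1}"
      and minorant: "\<And>y. y \<in> D \<Longrightarrow> l y + (max (F x) 0 - l x - \<epsilon>) \<le> lam * F y"
      using affine_minorant_of_pos_part[OF F] by blast
    have "l \<in> eps_subdiff T (scale_fun lam f) (\<epsilon> + lam * F x - max (F x) 0) x"
      using lam l minorant[OF x] minorant
      by (auto simp: scale linear_diff[OF linear] algebra_simps)
    with lam show "l \<in> (\<Union>lam\<in>{0..1}. eps_subdiff T (scale_fun lam f)
        (\<epsilon> + lam * real_of_ereal (f x) - real_of_ereal (fplus f x)) x)"
      by (auto simp: at_x)
  next
    fix l assume "l \<in> (\<Union>lam\<in>{0..1}. eps_subdiff T (scale_fun lam f)
        (\<epsilon> + lam * real_of_ereal (f x) - real_of_ereal (fplus f x)) x)"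
    then obtain lam where lam: "lam \<in> {0..1}"
      and "l \<in> eps_subdiff T (scale_fun lam f) (\<epsilon> + lam * F x - max (F x) 0) x"
      by (auto simp: at_x)
    then have l: "l \<in> dual_space T"
      and bound: "\<And>y. y \<in> D \<Longrightarrow> max (F x) 0 + l (y - x) - \<epsilon> \<le> lam * F y"
      using lam by (auto simp: scale)
    have "lam * F y \<le> max (F y) 0" for y
      using lam by (cases "F y \<ge> 0") (auto simp: mult_left_le_one_le mult_nonneg_nonpos)
    with l bound show "l \<in> eps_subdiff T (fplus f) \<epsilon> x"
      unfolding fplus by (blast intro: order_trans)
  qed
qed

end
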